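(* Let $G$ be a cubical $\omega$-category with connections, $n\ge1$, and $1\le j\le n-1$. For an $n$-shell $z=(z^-_1,z^+_1,\dots,z^-_n,z^+_n)$ define $\psi_jz=w=(w^\alpha_i)$ by: $w^\alpha_i=\psi_{j-1}z^\alpha_i$ for $i<j$; $w^-_j=z^-_j\circ_jz^+_{j+1}$; $w^+_j=z^-_{j+1}\circ_jz^+_j$; $w^\alpha_{j+1}=\varepsilon_j\partial^\alpha_jz^\alpha_{j+1}$; $w^\alpha_i=\psi_jz^\alpha_i$ for $i>j+1$. Then all these composites are defined, $\psi_jz$ is again an $n$-shell, and $\psi_j\partial=\partial\psi_j:G_n\to\square G_{n-1}$, where $\partial x=(\partial^-_1x,\partial^+_1x,\dots,\partial^-_nx,\partial^+_nx)$.
   Context: A cubical $\omega$-category with connections $G$ consists of sets $G_n$ ($n\ge0$), face maps $\partial^\alpha_i:G_n\to G_{n-1}$, degeneracies $\varepsilon_i:G_{n-1}\to G_n$, connections $\Gamma^\alpha_i:G_n\to G_{n+1}$ ($1\le i\le n$, $\alpha=\pm$) and partial compositions $\circ_j$ on $G_n$ ($1\le j\le n$, $a\circ_jb$ defined iff $\partial^+_ja=\partial^-_jb$) satisfying: $\partial^\alpha_i\partial^\beta_j=\partial^\beta_{j-1}\partial^\alpha_i$ ($i<j$), $\varepsilon_i\varepsilon_j=\varepsilon_{j+1}\varepsilon_i$ ($i\le j$), $\partial^\alpha_i\varepsilon_j=\varepsilon_{j-1}\partial^\alpha_i$ ($i<j$), $\varepsilon_j\partial^\alpha_{i-1}$ ($i>j$),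 $\mathrm{id}$ ($i=j$); $\Gamma^\alpha_i\Gamma^\beta_j=\Gamma^\beta_{j+1}\Gamma^\alpha_i$ ($i<j$), $\Gamma^\alpha_i\Gamma^\alpha_i=\Gamma^\alpha_{i+1}\Gamma^\alpha_i$, $\Gamma^\alpha_i\varepsilon_j=\varepsilon_{j+1}\Gamma^\alpha_i$ ($i<j$), $\varepsilon_j\Gamma^\alpha_{i-1}$ ($i>j$), $\Gamma^\alpha_j\varepsilon_j=\varepsilon_{j+1}\varepsilon_j$, $\partial^\alpha_i\Gamma^\beta_j=\Gamma^\beta_{j-1}\partial^\alpha_i$ ($i<j$), $\Gamma^\beta_j\partial^\alpha_{i-1}$ ($i>j+1$), $\partial^\alpha_j\Gamma^\alpha_j=\partial^\alpha_{j+1}\Gamma^\alpha_j=\mathrm{id}$, $\partial^\alpha_j\Gamma^{-\alpha}_j=\partial^\alpha_{j+1}\Gamma^{-\alpha}_j=\varepsilon_j\partial^\alpha_j$; $\partial^-_j(a\circ_jb)=\partial^-_ja$, $\partial^+_j(a\circ_jb)=\partial^+_jb$, $\partial^\alpha_i(a\circ_jb)=\partial^\alpha_ia\circ_{j-1}\partial^\alpha_ib$ ($i<j$), $\partial^\alpha_ia\circ_j\partial^\alpha_ib$ ($i>j$); interchange $(a\circ_ib)\circ_j(c\circ_id)=(a\circ_jc)\circ_i(b\circ_jd)$ for $i\ne j$; $\varepsilon_i(a\circ_jb)=\varepsilon_ia\circ_{j+1}\varepsilon_ib$ ($i\le j$), $\varepsilon_ia\circ_j\varepsilon_ib$ ($i>j$);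 $\Gamma^\alpha_i(a\circ_jb)=\Gamma^\alpha_ia\circ_{j+1}\Gamma^\alpha_ib$ ($i<j$), $\Gamma^\alpha_ia\circ_j\Gamma^\alpha_ib$ ($i>j$); $\Gamma^+_j(a\circ_jb)=(\Gamma^+_ja\circ_j\varepsilon_ja)\circ_{j+1}(\varepsilon_{j+1}a\circ_j\Gamma^+_jb)$, $\Gamma^-_j(a\circ_jb)=(\Gamma^-_ja\circ_j\varepsilon_{j+1}b)\circ_{j+1}(\varepsilon_jb\circ_j\Gamma^-_jb)$; each $\circ_j$ is a category structure with identities $\varepsilon_jy$; $\Gamma^+_ix\circ_i\Gamma^-_ix=\varepsilon_{i+1}x$, $\Gamma^+_ix\circ_{i+1}\Gamma^-_ix=\varepsilon_ix$. Folding operation on $G_m$: $\psi_ix=\Gamma^+_i\partial^-_{i+1}x\circ_{i+1}x\circ_{i+1}\Gamma^-_i\partial^+_{i+1}x$ for $1\le i\le m-1$. An $n$-shell in $G$ is a $2n$-tuple $z=(z^-_1,z^+_1,\dots,z^-_n,z^+_n)$ of elements of $G_{n-1}$ with $\partial^\alpha_iz^\beta_j=\partial^\beta_{j-1}z^\alpha_i$ whenever $i<j$; the set of $n$-shells is $\square G_{n-1}$. *)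

theory Defs
  imports Main
begin

text \<open>Conventions (dimension-indexed, signs: True = +, False = -):
  \<^item> cell G m = G_m;
  \<^item> face G m i a x = \<partial>^a_i x for x in G_m (result in G_(m-1)), 1 \<le> i \<le> m;
  \<^item> degen G m i y = \<epsilon>_i y for y in G_(m-1) (result in G_m), 1 \<le> i \<le> m;
  \<^item> conn G m i a x = \<Gamma>^a_i x for x in G_m (result in G_(m+1)), 1 \<le> i \<le> m;
  \<^item> comp G m j a b = a \<circ>_j b in G_m, 1 \<le> j \<le> m (meaningful only when composable).\<close>

record 'a cubical_data =
  cell  :: "nat \<Rightarrow> 'a set"
  face  :: "nat \<Rightarrow> nat \<Rightarrow> bool \<Rightarrow> 'a \<Rightarrow> 'a"
  degen :: "nat \<Rightarrow> nat \<Rightarrow> 'a \<Rightarrow> 'a"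
  conn  :: "nat \<Rightarrow> nat \<Rightarrow> bool \<Rightarrow> 'a \<Rightarrow> 'a"
  comp  :: "nat \<Rightarrow> nat \<Rightarrow> 'a \<Rightarrow> 'a \<Rightarrow> 'a"

definition composable :: "'a cubical_data \<Rightarrow> nat \<Rightarrow> nat \<Rightarrow> 'a \<Rightarrow> 'a \<Rightarrow> bool" where
  "composable G m j a b \<longleftrightarrow> a \<in> cell G m \<and> b \<in> cell G m \<and> 1 \<le> j \<and> j \<le> m \<and>
     face G m j True a = face G m j False b"

definition cubical_omega_cat_conn :: "'a cubical_data \<Rightarrow> bool" where
  "cubical_omega_cat_conn G \<longleftrightarrow>
    \<comment> \<open>typing of the operations\<close>
    (\<forall>m i a x. x \<in> cell G (Suc m) \<and> 1 \<le> i \<and> i \<le> Suc m \<longrightarrow> face G (Suc m) i a x \<in> cell G m) \<and>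
    (\<forall>m i y. y \<in> cell G m \<and> 1 \<le> i \<and> i \<le> Suc m \<longrightarrow> degen G (Suc m) i y \<in> cell G (Suc m)) \<and>
    (\<forall>m i a x. x \<in> cell G m \<and> 1 \<le> i \<and> i \<le> m \<longrightarrow> conn G m i a x \<in> cell G (Suc m)) \<and>
    (\<forall>m j a b. composable G m j a b \<longrightarrow> comp G m j a b \<in> cell G m) \<and>
    \<comment> \<open>face/face\<close>
    (\<forall>m i j a b x. x \<in> cell G (Suc (Suc m)) \<and> 1 \<le> i \<and> i < j \<and> j \<le> Suc (Suc m) \<longrightarrow>
        face G (Suc m) i a (face G (Suc (Suc m)) j b x) = face G (Suc m) (j - 1) b (face G (Suc (Suc m)) i a x)) \<and>
    \<comment> \<open>degen/degen\<close>
    (\<forall>m i j y. y \<in> cell G m \<and> 1 \<le> i \<and> i \<le> j \<and> j \<le> Suc m \<longrightarrow>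
        degen G (Suc (Suc m)) i (degen G (Suc m) j y) = degen G (Suc (Suc m)) (Suc j) (degen G (Suc m) i y)) \<and>
    \<comment> \<open>face/degen\<close>
    (\<forall>m i j a y. y \<in> cell G m \<and> 1 \<le> i \<and> i \<le> Suc m \<and> 1 \<le> j \<and> j \<le> Suc m \<longrightarrow>
        (i < j \<longrightarrow> face G (Suc m) i a (degen G (Suc m) j y) = degen G m (j - 1) (face G m i a y)) \<and>
        (j < i \<longrightarrow> face G (Suc m) i a (degen G (Suc m) j y) = degen G m j (face G m (i - 1) a y)) \<and>
        (i = j \<longrightarrow> face G (Suc m) i a (degen G (Suc m) j y) = y)) \<and>
    \<comment> \<open>conn/conn\<close>
    (\<forall>m i j a b x. x \<in> cell G m \<and> 1 \<le> i \<and> i < j \<and> j \<le> m \<longrightarrow>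
        conn G (Suc m) i a (conn G m j b x) = conn G (Suc m) (Suc j) b (conn G m i a x)) \<and>
    (\<forall>m i a x. x \<in> cell G m \<and> 1 \<le> i \<and> i \<le> m \<longrightarrow>
        conn G (Suc m) i a (conn G m i a x) = conn G (Suc m) (Suc i) a (conn G m i a x)) \<and>
    \<comment> \<open>conn/degen\<close>
    (\<forall>m i j a y. y \<in> cell G m \<and> 1 \<le> i \<and> i \<le> Suc m \<and> 1 \<le> j \<and> j \<le> Suc m \<longrightarrow>
        (i < j \<longrightarrow> conn G (Suc m) i a (degen G (Suc m) j y) = degen G (Suc (Suc m)) (Suc j) (conn G m i a y)) \<and>
        (j < i \<longrightarrow> conn G (Suc m) i a (degen G (Suc m) j y) = degen G (Suc (Suc m)) j (conn G m (i - 1) a y)) \<and>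
        (i = j \<longrightarrow> conn G (Suc m) i a (degen G (Suc m) j y) = degen G (Suc (Suc m)) (Suc j) (degen G (Suc m) j y))) \<and>
    \<comment> \<open>face/conn\<close>
    (\<forall>m i j a b x. x \<in> cell G m \<and> 1 \<le> j \<and> j \<le> m \<and> 1 \<le> i \<and> i \<le> Suc m \<longrightarrow>
        (i < j \<longrightarrow> face G (Suc m) i a (conn G m j b x) = conn G (m - 1) (j - 1) b (face G m i a x)) \<and>
        (Suc j < i \<longrightarrow> face G (Suc m) i a (conn G m j b x) = conn G (m - 1) j b (face G m (i - 1) a x))) \<and>
    (\<forall>m j a x. x \<in> cell G m \<and> 1 \<le> j \<and> j \<le> m \<longrightarrow>
        face G (Suc m) j a (conn G m j a x) = x \<and>
        face G (Suc m) (Suc j) a (conn G m j a x) = x \<and>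
        face G (Suc m) j a (conn G m j (\<not> a) x) = degen G m j (face G m j a x) \<and>
        face G (Suc m) (Suc j) a (conn G m j (\<not> a) x) = degen G m j (face G m j a x)) \<and>
    \<comment> \<open>face/comp\<close>
    (\<forall>m j a b. composable G m j a b \<longrightarrow>
        face G m j False (comp G m j a b) = face G m j False a \<and>
        face G m j True (comp G m j a b) = face G m j True b \<and>
        (\<forall>i s. 1 \<le> i \<and> i < j \<longrightarrow>
           face G m i s (comp G m j a b) = comp G (m - 1) (j - 1) (face G m i s a) (face G m i s b)) \<and>
        (\<forall>i s. j < i \<and> i \<le> m \<longrightarrow>
           face G m i s (comp G m j a b) = comp G (m - 1) j (face G m i s a) (face G m i s b))) \<and>
    \<comment> \<open>interchange\<close>
    (\<forall>m i j a b c d. i \<noteq> j \<and> composable G m i a b \<and> composable G m i c d \<and>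
        composable G m j a c \<and> composable G m j b d \<longrightarrow>
        comp G m j (comp G m i a b) (comp G m i c d) = comp G m i (comp G m j a c) (comp G m j b d)) \<and>
    \<comment> \<open>degen/comp\<close>
    (\<forall>m i j a b. composable G m j a b \<and> 1 \<le> i \<and> i \<le> Suc m \<longrightarrow>
        (i \<le> j \<longrightarrow> degen G (Suc m) i (comp G m j a b) =
                    comp G (Suc m) (Suc j) (degen G (Suc m) i a) (degen G (Suc m) i b)) \<and>
        (j < i \<longrightarrow> degen G (Suc m) i (comp G m j a b) =
                    comp G (Suc m) j (degen G (Suc m) i a) (degen G (Suc m) i b))) \<and>
    \<comment> \<open>conn/comp\<close>
    (\<forall>m i j s a b. composable G m j a b \<and> 1 \<le> i \<and> i \<le> m \<longrightarrow>
        (i < j \<longrightarrow> conn G m i s (comp G m j a b) = comp G (Suc m) (Suc j) (conn G m i s a) (conn G m i s b)) \<and>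
        (j < i \<longrightarrow> conn G m i s (comp G m j a b) = comp G (Suc m) j (conn G m i s a) (conn G m i s b))) \<and>
    (\<forall>m j a b. composable G m j a b \<longrightarrow>
        conn G m j True (comp G m j a b) =
          comp G (Suc m) (Suc j)
            (comp G (Suc m) j (conn G m j True a) (degen G (Suc m) j a))
            (comp G (Suc m) j (degen G (Suc m) (Suc j) a) (conn G m j True b)) \<and>
        conn G m j False (comp G m j a b) =
          comp G (Suc m) (Suc j)
            (comp G (Suc m) j (conn G m j False a) (degen G (Suc m) (Suc j) b))
            (comp G (Suc m) j (degen G (Suc m) j b) (conn G m j False b))) \<and>
    \<comment> \<open>each \<circ>_j is a category with identities \<epsilon>_j y\<close>
    (\<forall>m j a b c. composable G m j a b \<and> composable G m j b c \<longrightarrow>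
        comp G m j (comp G m j a b) c = comp G m j a (comp G m j b c)) \<and>
    (\<forall>m j a. a \<in> cell G m \<and> 1 \<le> j \<and> j \<le> m \<longrightarrow>
        comp G m j (degen G m j (face G m j False a)) a = a \<and>
        comp G m j a (degen G m j (face G m j True a)) = a) \<and>
    \<comment> \<open>connection cancellation\<close>
    (\<forall>m i x. x \<in> cell G m \<and> 1 \<le> i \<and> i \<le> m \<longrightarrow>
        comp G (Suc m) i (conn G m i True x) (conn G m i False x) = degen G (Suc m) (Suc i) x \<and>
        comp G (Suc m) (Suc i) (conn G m i True x) (conn G m i False x) = degen G (Suc m) i x)"

definition psi :: "'a cubical_data \<Rightarrow> nat \<Rightarrow> nat \<Rightarrow> 'a \<Rightarrow> 'a" where
  "psi G m i x = comp G m (Suc i)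
      (comp G m (Suc i) (conn G (m - 1) i True (face G m (Suc i) False x)) x)
      (conn G (m - 1) i False (face G m (Suc i) True x))"

definition psi_defined :: "'a cubical_data \<Rightarrow> nat \<Rightarrow> nat \<Rightarrow> 'a \<Rightarrow> bool" where
  "psi_defined G m i x \<longleftrightarrow>
     composable G m (Suc i) (conn G (m - 1) i True (face G m (Suc i) False x)) x \<and>
     composable G m (Suc i) (comp G m (Suc i) (conn G (m - 1) i True (face G m (Suc i) False x)) x)
                               (conn G (m - 1) i False (face G m (Suc i) True x))"

text \<open>An n-shell: z i a = z^a_i for 1 \<le> i \<le> n (other values irrelevant).\<close>
definition is_shell :: "'a cubical_data \<Rightarrow> nat \<Rightarrow> (nat \<Rightarrow> bool \<Rightarrow> 'a) \<Rightarrow> bool" where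
  "is_shell G n z \<longleftrightarrow> (\<forall>i a. 1 \<le> i \<and> i \<le> n \<longrightarrow> z i a \<in> cell G (n - 1)) \<and>
     (\<forall>i j a b. 1 \<le> i \<and> i < j \<and> j \<le> n \<longrightarrow>
        face G (n - 1) i a (z j b) = face G (n - 1) (j - 1) b (z i a))"

definition bdry :: "'a cubical_data \<Rightarrow> nat \<Rightarrow> 'a \<Rightarrow> nat \<Rightarrow> bool \<Rightarrow> 'a" where
  "bdry G n x i a = face G n i a x"

definition shell_psi :: "'a cubical_data \<Rightarrow> nat \<Rightarrow> nat \<Rightarrow> (nat \<Rightarrow> bool \<Rightarrow> 'a) \<Rightarrow> nat \<Rightarrow> bool \<Rightarrow> 'a" where
  "shell_psi G n j z i a =
     (if i < j then psi G (n - 1) (j - 1) (z i a)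
      else if i = j then
        (if a then comp G (n - 1) j (z (Suc j) False) (z j True)
         else comp G (n - 1) j (z j False) (z (Suc j) True))
      else if i = Suc j then degen G (n - 1) j (face G (n - 1) j a (z (Suc j) a))
      else psi G (n - 1) j (z i a))"

end

(* Three face rules for the folding \<psi>_i x carry the whole argument: \<psi>_i commutes with \<partial>_l
   for l < i and l > i+1 (up to reindexing); \<partial>_(i+1) \<psi>_i x is the thin cell
   \<epsilon>_i \<partial>_i \<partial>_(i+1) x; and \<partial>^-_i \<psi>_i x, \<partial>^+_i \<psi>_i x are composites of two faces of x,
   because the remaining faces of the two connections are degenerate, hence identities
   for \<circ>_i.  Read componentwise, these rules are the identity \<psi>_j \<partial> = \<partial> \<psi>_j.  Applied one
   dimension lower to the components of a shell z, they reduce each shell condition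
   \<partial>_I w_K = \<partial>_(K-1) w_I of w = \<psi>_j z to a shell condition of z, by a case distinction
   on the positions of I < K relative to j and j+1. *)

theory Submission
  imports Defs
begin

locale cubical_omega_category =
  fixes G :: "'a cubical_data"
  assumes axioms: "cubical_omega_cat_conn G"
begin

lemma face_in_cell: "x \<in> cell G (Suc m) \<Longrightarrow> 1 \<le> i \<Longrightarrow> i \<le> Suc m \<Longrightarrow>
    face G (Suc m) i a x \<in> cell G m"
  using axioms unfolding cubical_omega_cat_conn_def by (elim conjE) meson

lemma degen_in_cell: "y \<in> cell G m \<Longrightarrow> 1 \<le> i \<Longrightarrow> i \<le> Suc m \<Longrightarrow>
    degen G (Suc m) i y \<in> cell G (Suc m)"
  using axioms unfolding cubical_omega_cat_conn_def by (elim conjE) meson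

lemma conn_in_cell: "x \<in> cell G m \<Longrightarrow> 1 \<le> i \<Longrightarrow> i \<le> m \<Longrightarrow>
    conn G m i a x \<in> cell G (Suc m)"
  using axioms unfolding cubical_omega_cat_conn_def by (elim conjE) meson

lemma comp_in_cell: "composable G m j a b \<Longrightarrow> comp G m j a b \<in> cell G m"
  using axioms unfolding cubical_omega_cat_conn_def by (elim conjE) meson

lemma face_face:
  assumes "x \<in> cell G (Suc m)" "1 \<le> i" "i < j" "j \<le> Suc m"
  shows "face G m i a (face G (Suc m) j b x) = face G m (j - 1) b (face G (Suc m) i a x)"
proof -
  obtain m' where m: "m = Suc m'" using assms by (cases m) auto
  show ?thesis
    using assms axioms unfolding cubical_omega_cat_conn_def m by (elim conjE) meson
qed

lemma face_degen_less:
  assumes "y \<in> cell G m" "1 \<le> i" "i < j" "j \<le> Suc m"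
  shows "face G (Suc m) i a (degen G (Suc m) j y) = degen G m (j - 1) (face G m i a y)"
proof -
  have "i \<le> Suc m" "1 \<le> j" using assms by linarith+
  with assms show ?thesis
    using axioms unfolding cubical_omega_cat_conn_def by (elim conjE) meson
qed

lemma face_degen_greater:
  assumes "y \<in> cell G m" "1 \<le> j" "j < i" "i \<le> Suc m"
  shows "face G (Suc m) i a (degen G (Suc m) j y) = degen G m j (face G m (i - 1) a y)"
proof -
  have "j \<le> Suc m" "1 \<le> i" using assms by linarith+
  with assms show ?thesis
    using axioms unfolding cubical_omega_cat_conn_def by (elim conjE) meson
qed

lemma face_degen_same: "y \<in> cell G m \<Longrightarrow> 1 \<le> i \<Longrightarrow> i \<le> Suc m \<Longrightarrow>
    face G (Suc m) i a (degen G (Suc m) i y) = y"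
  using axioms unfolding cubical_omega_cat_conn_def by (elim conjE) metis

lemma face_conn_less:
  assumes "x \<in> cell G m" "1 \<le> i" "i < j" "j \<le> m"
  shows "face G (Suc m) i a (conn G m j b x) = conn G (m - 1) (j - 1) b (face G m i a x)"
proof -
  have "i \<le> Suc m" "1 \<le> j" using assms by linarith+
  with assms show ?thesis
    using axioms unfolding cubical_omega_cat_conn_def by (elim conjE) meson
qed

lemma face_conn_greater:
  assumes "x \<in> cell G m" "1 \<le> j" "Suc j < i" "i \<le> Suc m"
  shows "face G (Suc m) i a (conn G m j b x) = conn G (m - 1) j b (face G m (i - 1) a x)"
proof -
  have "j \<le> m" "1 \<le> i" using assms by linarith+
  with assms show ?thesis
    using axioms unfolding cubical_omega_cat_conn_def by (elim conjE) meson
qed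

lemma face_conn_same: "x \<in> cell G m \<Longrightarrow> 1 \<le> j \<Longrightarrow> j \<le> m \<Longrightarrow>
    face G (Suc m) j a (conn G m j a x) = x"
  using axioms unfolding cubical_omega_cat_conn_def by (elim conjE) meson

lemma face_Suc_conn_same: "x \<in> cell G m \<Longrightarrow> 1 \<le> j \<Longrightarrow> j \<le> m \<Longrightarrow>
    face G (Suc m) (Suc j) a (conn G m j a x) = x"
  using axioms unfolding cubical_omega_cat_conn_def by (elim conjE) meson

lemma face_conn_opposite:
  assumes "x \<in> cell G m" "1 \<le> j" "j \<le> m" "a \<noteq> b"
  shows "face G (Suc m) j a (conn G m j b x) = degen G m j (face G m j a x)"
proof -
  have b: "b = (\<not> a)" using \<open>a \<noteq> b\<close> by blast
  show ?thesis
    using assms axioms unfolding cubical_omega_cat_conn_def b by (elim conjE) meson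
qed

lemma face_Suc_conn_opposite:
  assumes "x \<in> cell G m" "1 \<le> j" "j \<le> m" "a \<noteq> b"
  shows "face G (Suc m) (Suc j) a (conn G m j b x) = degen G m j (face G m j a x)"
proof -
  have b: "b = (\<not> a)" using \<open>a \<noteq> b\<close> by blast
  show ?thesis
    using assms axioms unfolding cubical_omega_cat_conn_def b by (elim conjE) meson
qed

lemma face_comp_source: "composable G m j a b \<Longrightarrow>
    face G m j False (comp G m j a b) = face G m j False a"
  using axioms unfolding cubical_omega_cat_conn_def by (elim conjE) meson

lemma face_comp_target: "composable G m j a b \<Longrightarrow>
    face G m j True (comp G m j a b) = face G m j True b"
  using axioms unfolding cubical_omega_cat_conn_def by (elim conjE) meson

lemma face_comp_less: "composable G m j a b \<Longrightarrow> 1 \<le> i \<Longrightarrow> i < j \<Longrightarrow>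
    face G m i s (comp G m j a b) = comp G (m - 1) (j - 1) (face G m i s a) (face G m i s b)"
  using axioms unfolding cubical_omega_cat_conn_def by (elim conjE) meson

lemma face_comp_greater: "composable G m j a b \<Longrightarrow> j < i \<Longrightarrow> i \<le> m \<Longrightarrow>
    face G m i s (comp G m j a b) = comp G (m - 1) j (face G m i s a) (face G m i s b)"
  using axioms unfolding cubical_omega_cat_conn_def by (elim conjE) meson

lemma comp_id_left: "a \<in> cell G m \<Longrightarrow> 1 \<le> j \<Longrightarrow> j \<le> m \<Longrightarrow>
    comp G m j (degen G m j (face G m j False a)) a = a"
  using axioms unfolding cubical_omega_cat_conn_def by (elim conjE) meson

lemma comp_id_right: "a \<in> cell G m \<Longrightarrow> 1 \<le> j \<Longrightarrow> j \<le> m \<Longrightarrow>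
    comp G m j a (degen G m j (face G m j True a)) = a"
  using axioms unfolding cubical_omega_cat_conn_def by (elim conjE) meson

lemma psi_inner_composable:
  assumes "x \<in> cell G (Suc k)" "1 \<le> i" "i \<le> k"
  shows "composable G (Suc k) (Suc i) (conn G k i True (face G (Suc k) (Suc i) False x)) x"
  unfolding composable_def using assms
  by (simp add: face_in_cell conn_in_cell face_Suc_conn_same)

lemma psi_outer_composable:
  assumes "x \<in> cell G (Suc k)" "1 \<le> i" "i \<le> k"
  shows "composable G (Suc k) (Suc i)
           (comp G (Suc k) (Suc i) (conn G k i True (face G (Suc k) (Suc i) False x)) x)
           (conn G k i False (face G (Suc k) (Suc i) True x))"
  unfolding composable_def using assms psi_inner_composable[OF assms]
  by (simp add: face_in_cell conn_in_cell comp_in_cell face_comp_target face_Suc_conn_same)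

lemma psi_definedI: "x \<in> cell G (Suc k) \<Longrightarrow> 1 \<le> i \<Longrightarrow> i \<le> k \<Longrightarrow>
    psi_defined G (Suc k) i x"
  by (simp add: psi_defined_def psi_inner_composable psi_outer_composable)

lemma psi_in_cell: "x \<in> cell G (Suc k) \<Longrightarrow> 1 \<le> i \<Longrightarrow> i \<le> k \<Longrightarrow>
    psi G (Suc k) i x \<in> cell G (Suc k)"
  by (simp add: psi_def psi_outer_composable comp_in_cell)

lemma face_psi_less:
  assumes x: "x \<in> cell G (Suc k)" and i: "1 \<le> i" "i \<le> k" and l: "1 \<le> l" "l < i"
  shows "face G (Suc k) l a (psi G (Suc k) i x) = psi G k (i - 1) (face G (Suc k) l a x)"
proof -
  let ?y0 = "face G (Suc k) (Suc i) False x" and ?y1 = "face G (Suc k) (Suc i) True x"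
  have "face G (Suc k) l a (psi G (Suc k) i x) =
      comp G k i (comp G k i (conn G (k - 1) (i - 1) True (face G k l a ?y0)) (face G (Suc k) l a x))
        (conn G (k - 1) (i - 1) False (face G k l a ?y1))"
    using assms psi_inner_composable[OF x i] psi_outer_composable[OF x i]
    by (simp add: psi_def face_comp_less face_conn_less face_in_cell)
  also have "\<dots> = psi G k (i - 1) (face G (Suc k) l a x)"
    using assms by (simp add: psi_def face_face)
  finally show ?thesis .
qed

lemma face_psi_greater:
  assumes x: "x \<in> cell G (Suc k)" and i: "1 \<le> i" "i \<le> k" and l: "Suc i < l" "l \<le> Suc k"
  shows "face G (Suc k) l a (psi G (Suc k) i x) = psi G k i (face G (Suc k) l a x)"
proof -
  let ?y0 = "face G (Suc k) (Suc i) False x" and ?y1 = "face G (Suc k) (Suc i) True x"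
  have "face G (Suc k) l a (psi G (Suc k) i x) =
      comp G k (Suc i)
        (comp G k (Suc i) (conn G (k - 1) i True (face G k (l - 1) a ?y0)) (face G (Suc k) l a x))
        (conn G (k - 1) i False (face G k (l - 1) a ?y1))"
    using assms psi_inner_composable[OF x i] psi_outer_composable[OF x i]
    by (simp add: psi_def face_comp_greater face_conn_greater face_in_cell)
  also have "\<dots> = psi G k i (face G (Suc k) l a x)"
    using assms by (simp add: psi_def face_face)
  finally show ?thesis .
qed

lemma face_Suc_psi:
  assumes "x \<in> cell G (Suc k)" "1 \<le> i" "i \<le> k"
  shows "face G (Suc k) (Suc i) a (psi G (Suc k) i x) =
    degen G k i (face G k i a (face G (Suc k) (Suc i) a x))"
  using assms psi_inner_composable[OF assms] psi_outer_composable[OF assms]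
  by (cases a) (simp_all add: psi_def face_comp_source face_comp_target face_Suc_conn_opposite face_in_cell)

lemma face_psi_source:
  assumes x: "x \<in> cell G (Suc k)" and i: "1 \<le> i" "i \<le> k"
  shows "face G (Suc k) i False (psi G (Suc k) i x) =
    comp G k i (face G (Suc k) i False x) (face G (Suc k) (Suc i) True x)"
proof -
  let ?x0 = "face G (Suc k) i False x"
  have "face G (Suc k) i False (psi G (Suc k) i x) =
      comp G k i (comp G k i (degen G k i (face G k i False ?x0)) ?x0) (face G (Suc k) (Suc i) True x)"
    using assms psi_inner_composable[OF x i] psi_outer_composable[OF x i]
    by (simp add: psi_def face_comp_less face_conn_opposite face_conn_same face_face face_in_cell)
  also have "\<dots> = comp G k i ?x0 (face G (Suc k) (Suc i) True x)"
    using assms by (simp add: comp_id_left face_in_cell)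
  finally show ?thesis .
qed

lemma face_psi_target:
  assumes x: "x \<in> cell G (Suc k)" and i: "1 \<le> i" "i \<le> k"
  shows "face G (Suc k) i True (psi G (Suc k) i x) =
    comp G k i (face G (Suc k) (Suc i) False x) (face G (Suc k) i True x)"
proof -
  let ?y0 = "face G (Suc k) (Suc i) False x" and ?x1 = "face G (Suc k) i True x"
  have y0x1: "composable G k i ?y0 ?x1"
    unfolding composable_def using assms by (simp add: face_in_cell face_face)
  have "face G (Suc k) i True (psi G (Suc k) i x) =
      comp G k i (comp G k i ?y0 ?x1) (degen G k i (face G k i True ?x1))"
    using assms psi_inner_composable[OF x i] psi_outer_composable[OF x i]
    by (simp add: psi_def face_comp_less face_conn_opposite face_conn_same face_face face_in_cell)
  also have "\<dots> = comp G k i ?y0 ?x1"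
    using comp_id_right[OF comp_in_cell[OF y0x1] i] by (simp add: face_comp_target[OF y0x1])
  finally show ?thesis .
qed

lemma shell_psi_bdry:
  assumes "x \<in> cell G (Suc k)" "1 \<le> i" "i \<le> k" "1 \<le> l" "l \<le> Suc k"
  shows "shell_psi G (Suc k) i (bdry G (Suc k) x) l a = face G (Suc k) l a (psi G (Suc k) i x)"
  using assms by (cases a)
    (simp_all add: shell_psi_def bdry_def face_psi_less face_psi_greater face_Suc_psi
      face_psi_source face_psi_target)

end

locale folded_shell = cubical_omega_category +
  fixes k j :: nat and z :: "nat \<Rightarrow> bool \<Rightarrow> 'a"
  assumes j_pos: "1 \<le> j" and j_le: "j \<le> Suc k"
    and shell: "is_shell G (Suc (Suc k)) z"
begin

abbreviation w :: "nat \<Rightarrow> bool \<Rightarrow> 'a" where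
  "w \<equiv> shell_psi G (Suc (Suc k)) j z"

lemma z_in_cell: "1 \<le> i \<Longrightarrow> i \<le> Suc (Suc k) \<Longrightarrow> z i a \<in> cell G (Suc k)"
  using shell by (simp add: is_shell_def)

lemma z_compat: "1 \<le> i \<Longrightarrow> i < i' \<Longrightarrow> i' \<le> Suc (Suc k) \<Longrightarrow>
    face G (Suc k) i a (z i' b) = face G (Suc k) (i' - 1) b (z i a)"
  using shell by (simp add: is_shell_def)

lemma w_source_composable: "composable G (Suc k) j (z j False) (z (Suc j) True)"
  unfolding composable_def using j_pos j_le z_compat[of j "Suc j" False True] by (simp add: z_in_cell)

lemma w_target_composable: "composable G (Suc k) j (z (Suc j) False) (z j True)"
  unfolding composable_def using j_pos j_le z_compat[of j "Suc j" True False] by (simp add: z_in_cell)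

lemma w_in_cell: "1 \<le> i \<Longrightarrow> i \<le> Suc (Suc k) \<Longrightarrow> w i a \<in> cell G (Suc k)"
  using j_pos j_le w_source_composable w_target_composable
  by (simp add: shell_psi_def psi_in_cell comp_in_cell degen_in_cell face_in_cell z_in_cell)

lemma w_compat_below_below:
  assumes "1 \<le> I" "I < K" "K < j"
  shows "face G (Suc k) I a (w K b) = face G (Suc k) (K - 1) b (w I a)"
  using assms j_le z_compat[of I K a b] by (simp add: shell_psi_def face_psi_less z_in_cell)

lemma w_compat_below_j:
  assumes "1 \<le> I" "I < j"
  shows "face G (Suc k) I a (w j b) = face G (Suc k) (j - 1) b (w I a)"
  using assms j_le z_compat[of I j a] z_compat[of I "Suc j" a] w_source_composable w_target_composable
  by (cases b) (simp_all add: shell_psi_def face_comp_less face_psi_source face_psi_target z_in_cell)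

lemma w_compat_below_Suc_j:
  assumes "1 \<le> I" "I < j"
  shows "face G (Suc k) I a (w (Suc j) b) = face G (Suc k) j b (w I a)"
  using assms j_le z_compat[of I "Suc j" a b] face_Suc_psi[of "z I a" k "j - 1"]
  by (simp add: shell_psi_def face_degen_less face_face face_in_cell z_in_cell)

lemma w_compat_below_above:
  assumes "1 \<le> I" "I < j" "Suc j < K" "K \<le> Suc (Suc k)"
  shows "face G (Suc k) I a (w K b) = face G (Suc k) (K - 1) b (w I a)"
  using assms z_compat[of I K a b] by (simp add: shell_psi_def face_psi_less face_psi_greater z_in_cell)

lemma w_compat_j_Suc_j: "face G (Suc k) j a (w (Suc j) b) = face G (Suc k) j b (w j a)"
  using j_pos j_le z_compat[of j "Suc j"] w_source_composable w_target_composable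
  by (cases a; cases b)
    (simp_all add: shell_psi_def face_degen_same face_comp_source face_comp_target face_in_cell z_in_cell)

lemma w_compat_j_above:
  assumes "Suc j < K" "K \<le> Suc (Suc k)"
  shows "face G (Suc k) j a (w K b) = face G (Suc k) (K - 1) b (w j a)"
  using assms j_pos z_compat[of j K] z_compat[of "Suc j" K] w_source_composable w_target_composable
  by (cases a) (simp_all add: shell_psi_def face_psi_source face_psi_target face_comp_greater z_in_cell)

lemma w_compat_Suc_j_above:
  assumes "Suc j < K" "K \<le> Suc (Suc k)"
  shows "face G (Suc k) (Suc j) a (w K b) = face G (Suc k) (K - 1) b (w (Suc j) a)"
  using assms j_pos z_compat[of "Suc j" K a b]
  by (simp add: shell_psi_def face_Suc_psi face_degen_greater face_face face_in_cell z_in_cell)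

lemma w_compat_above_above:
  assumes "Suc j < I" "I < K" "K \<le> Suc (Suc k)"
  shows "face G (Suc k) I a (w K b) = face G (Suc k) (K - 1) b (w I a)"
  using assms j_pos z_compat[of I K a b] by (simp add: shell_psi_def face_psi_greater z_in_cell)

lemma w_is_shell: "is_shell G (Suc (Suc k)) w"
  unfolding is_shell_def
proof (intro conjI allI impI)
  fix i a assume "1 \<le> i \<and> i \<le> Suc (Suc k)"
  then show "w i a \<in> cell G (Suc (Suc k) - 1)" by (simp add: w_in_cell)
next
  fix I K a b assume "1 \<le> I \<and> I < K \<and> K \<le> Suc (Suc k)"
  then have I: "1 \<le> I" "I < K" "K \<le> Suc (Suc k)" by simp_all
  consider "K < j" | "K = j" | "I < j" "K = Suc j" | "I < j" "Suc j < K" | "I = j" "K = Suc j"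
    | "I = j" "Suc j < K" | "I = Suc j" "Suc j < K" | "Suc j < I"
    using I by linarith
  then show "face G (Suc (Suc k) - 1) I a (w K b) = face G (Suc (Suc k) - 1) (K - 1) b (w I a)"
    by cases (use I w_compat_below_below w_compat_below_j w_compat_below_Suc_j w_compat_below_above
        w_compat_j_Suc_j w_compat_j_above w_compat_Suc_j_above w_compat_above_above in simp_all)
qed

lemma shell_psi_well_defined:
  "composable G (Suc k) j (z j False) (z (Suc j) True) \<and>
   composable G (Suc k) j (z (Suc j) False) (z j True) \<and>
   (\<forall>i a. 1 \<le> i \<and> i < j \<longrightarrow> psi_defined G (Suc k) (j - 1) (z i a)) \<and>
   (\<forall>i a. Suc j < i \<and> i \<le> Suc (Suc k) \<longrightarrow> psi_defined G (Suc k) j (z i a)) \<and>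
   is_shell G (Suc (Suc k)) w"
  using j_pos j_le w_source_composable w_target_composable w_is_shell
  by (auto simp: psi_definedI z_in_cell)

end

theorem proposition8p4:
  fixes G :: "'a cubical_data" and n j :: nat
  assumes "cubical_omega_cat_conn G" and "1 \<le> n" and "1 \<le> j" and "j \<le> n - 1"
  shows "(\<forall>z. is_shell G n z \<longrightarrow>
            composable G (n - 1) j (z j False) (z (Suc j) True) \<and>
            composable G (n - 1) j (z (Suc j) False) (z j True) \<and>
            (\<forall>i a. 1 \<le> i \<and> i < j \<longrightarrow> psi_defined G (n - 1) (j - 1) (z i a)) \<and>
            (\<forall>i a. Suc j < i \<and> i \<le> n \<longrightarrow> psi_defined G (n - 1) j (z i a)) \<and>
            is_shell G n (shell_psi G n j z)) \<and>
         (\<forall>x \<in> cell G n. psi_defined G n j x \<and>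
            (\<forall>i a. 1 \<le> i \<and> i \<le> n \<longrightarrow>
               shell_psi G n j (bdry G n x) i a = face G n i a (psi G n j x)))"
proof -
  obtain k where n: "n = Suc (Suc k)" using assms(2-4) by (cases n; cases "n - 1") auto
  have j: "1 \<le> j" "j \<le> Suc k" using assms(3,4) n by simp_all
  interpret cubical_omega_category G using assms(1) by (rule cubical_omega_category.intro)
  have folded: "folded_shell G k j z" if "is_shell G n z" for z
    using that j unfolding n by unfold_locales
  show ?thesis
    using folded_shell.shell_psi_well_defined[OF folded] j unfolding n diff_Suc_1
    by (simp add: psi_definedI shell_psi_bdry)
qed

end
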